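(* Let $T$ be a nonempty Hausdorff compact topological space, $\Omega$ a nonempty open subset of $\mathbb{R}^p$, and $h:\mathbb{R}^p\times T\to\mathbb{R}$, $f:\mathbb{R}^p\to\mathbb{R}$ functions. Assume that $\hat{x}\in\Omega$ is an optimal solution of the problem of maximizing $f(x)$ subject to $x\in\Omega$ and $h(x,t)\ge0$ for all $t\in T$, and that: (a) $T(\hat{x}):=\{t\in T:h(\hat{x},t)=0\}\neq\emptyset$; (b) $f$ is Gateaux differentiable at $\hat{x}$ and the family $(h(\cdot,t))_{t\in T}$ is equi-Gateaux differentiable at $\hat{x}$; (c) the family $(h(\cdot,t))_{t\in T\setminus T(\hat{x})}$ is equi-lower semicontinuous at $\hat{x}$; (d) the maps $t\mapsto h(\hat{x},t)$ and $t\mapsto\nabla_x h(\hat{x},t)$ are continuous. Then there exist $\lambda_i\ge0$ and $t_i\in T(\hat{x})$, $i=0,\dots,k$, with $k\le p$ and $\sum_{i=0}^k\lambda_i=1$, such that $$\lambda_0 d_G f(\hat{x})+\sum_{i=1}^k\lambda_i\nabla_x h(\hat{x},t_i)=0.$$ If moreover $0\notin\operatorname{conv}\{\nabla_x h(\hat{x},t):t\in T(\hat{x})\}$, then $\lambda_0\neq0$.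
   Context: $\nabla_x h(\hat x,t)$ denotes the Gateaux differential of $h(\cdot,t)$ at $\hat x$. A function $\phi$ is Gateaux differentiable at $x$ if there is a linear functional $d_G\phi(x)$ with $\lim_{t\searrow0}(\phi(x+tv)-\phi(x))/t=\langle d_G\phi(x),v\rangle$ for all $v$. A family $C$ of functions is equi-Gateaux differentiable at $x$ if each member is Gateaux differentiable at $x$ and for every $v$, $\lim_{s\searrow0}\sup_{\phi\in C}|(\phi(x+sv)-\phi(x)-s\langle d_G\phi(x),v\rangle)/s|=0$; it is equi-lower semicontinuous at $x$ if for every $\varepsilon>0$ there is an open neighbourhood $O$ of $x$ with $\phi(y)-\phi(x)>-\varepsilon$ for all $y\in O$ and all $\phi$ in the family. *)

theory Defs
  imports "HOL-Analysis.Analysis"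
begin

text \<open>Gateaux differential: a (bounded, automatically so in finite dimension) linear
functional d with lim_{s -> 0+} (phi(x + s v) - phi x)/s = d v for every direction v.\<close>

definition has_gateaux_diff :: "('a::real_normed_vector \<Rightarrow> real) \<Rightarrow> 'a \<Rightarrow> ('a \<Rightarrow>\<^sub>L real) \<Rightarrow> bool" where
  "has_gateaux_diff \<phi> x d \<longleftrightarrow>
     (\<forall>v. ((\<lambda>s. (\<phi> (x + s *\<^sub>R v) - \<phi> x) / s) \<longlongrightarrow> blinfun_apply d v) (at_right 0))"

definition gateaux_differentiable :: "('a::real_normed_vector \<Rightarrow> real) \<Rightarrow> 'a \<Rightarrow> bool" where
  "gateaux_differentiable \<phi> x \<longleftrightarrow> (\<exists>d. has_gateaux_diff \<phi> x d)"

definition gateaux_diff :: "('a::real_normed_vector \<Rightarrow> real) \<Rightarrow> 'a \<Rightarrow> ('a \<Rightarrow>\<^sub>L real)" where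
  "gateaux_diff \<phi> x = (THE d. has_gateaux_diff \<phi> x d)"

text \<open>Equi-Gateaux differentiability of the family (F i)_{i in I} at x:
  lim_{s -> 0+} sup_{i in I} |(F i (x+sv) - F i x - s d_G(F i)(x) v)/s| = 0, unfolded.\<close>
definition equi_gateaux_differentiable :: "('i \<Rightarrow> 'a::real_normed_vector \<Rightarrow> real) \<Rightarrow> 'i set \<Rightarrow> 'a \<Rightarrow> bool" where
  "equi_gateaux_differentiable F I x \<longleftrightarrow>
     (\<forall>i\<in>I. gateaux_differentiable (F i) x) \<and>
     (\<forall>v. \<forall>\<epsilon>>0. \<exists>\<delta>>0. \<forall>s. 0 < s \<and> s < \<delta> \<longrightarrow>
        (\<forall>i\<in>I. \<bar>(F i (x + s *\<^sub>R v) - F i x - s * blinfun_apply (gateaux_diff (F i) x) v) / s\<bar> \<le> \<epsilon>))"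

definition equi_lsc :: "('i \<Rightarrow> 'a::topological_space \<Rightarrow> real) \<Rightarrow> 'i set \<Rightarrow> 'a \<Rightarrow> bool" where
  "equi_lsc F I x \<longleftrightarrow>
     (\<forall>\<epsilon>>0. \<exists>U. open U \<and> x \<in> U \<and> (\<forall>y\<in>U. \<forall>i\<in>I. F i y - F i x > - \<epsilon>))"

end

theory Submission
  imports Defs
begin

(* If 0 were not a convex combination of d_G f(xh) and the gradients of the active
   constraints (a compact set of functionals, by (d)), a separating hyperplane would give a
   direction v along which f strictly increases and every active gradient is bounded below
   by some b > 0.  Small steps from xh along v then stay feasible: on the compact set of t
   where the gradient is below b/2 the slack h(xh,t) has a positive minimum, which
   equi-lower semicontinuity preserves, and elsewhere the equi-Gateaux linearisation
   dominates.  This contradicts optimality.  A conic Caratheodory argument reduces the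
   representation to at most p gradients besides d_G f(xh): if d_G f(xh) carries
   zero weight and the gradients used span the whole space, -d_G f(xh) lies in their cone. *)

section \<open>Convex combinations of zero with few points\<close>

definition convex_zero_combination :: "nat \<Rightarrow> 'v::real_vector \<Rightarrow> 'v set \<Rightarrow> bool" where
  "convex_zero_combination n A G \<longleftrightarrow>
     (\<exists>S c0 c. finite S \<and> S \<subseteq> G \<and> card S \<le> n \<and> 0 \<le> c0 \<and> (\<forall>g\<in>S. 0 \<le> c g) \<and>
        c0 + sum c S = 1 \<and> c0 *\<^sub>R A + (\<Sum>g\<in>S. c g *\<^sub>R g) = 0)"

lemma convex_hull_explicit_pos:
  assumes "y \<in> convex hull G"
  obtains P u where "finite P" "P \<subseteq> G" "\<forall>x\<in>P. 0 < u x" "sum u P = 1" "(\<Sum>x\<in>P. u x *\<^sub>R x) = y"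
proof -
  obtain S u where S: "finite S" "S \<subseteq> G" "\<forall>x\<in>S. 0 \<le> u x" "sum u S = 1" "(\<Sum>x\<in>S. u x *\<^sub>R x) = y"
    using assms unfolding convex_hull_explicit by blast
  define P where "P = {x\<in>S. u x \<noteq> 0}"
  have "sum u P = sum u S" "(\<Sum>x\<in>P. u x *\<^sub>R x) = (\<Sum>x\<in>S. u x *\<^sub>R x)"
    by (rule sum.mono_neutral_left; use S(1) in \<open>auto simp: P_def\<close>)+
  moreover have "\<forall>x\<in>P. 0 < u x"
    using S(3) by (force simp: P_def)
  ultimately show ?thesis
    using that[of P u] S by (auto simp: P_def)
qed

lemma conic_caratheodory:
  fixes x :: "'a::euclidean_space"
  assumes "finite S" "\<forall>g\<in>S. 0 \<le> \<kappa> g" "x = (\<Sum>g\<in>S. \<kappa> g *\<^sub>R g)"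
  shows "\<exists>S' \<kappa>'. S' \<subseteq> S \<and> card S' \<le> DIM('a) \<and> (\<forall>g\<in>S'. 0 \<le> \<kappa>' g) \<and>
           x = (\<Sum>g\<in>S'. \<kappa>' g *\<^sub>R g)"
  using assms
proof (induction "card S" arbitrary: S \<kappa> rule: less_induct)
  case less
  show ?case
  proof (cases "card S \<le> DIM('a)")
    case True
    then show ?thesis using less.prems by blast
  next
    case False
    then have "dependent S" using dependent_biggerset[of S] by auto
    then obtain w g0 where g0: "g0 \<in> S" "w g0 \<noteq> 0" and w: "(\<Sum>v\<in>S. w v *\<^sub>R v) = 0"
      using dependent_finite[OF less.prems(1)] by auto
    \<comment> \<open>Move along the dependence until the first coefficient vanishes: all coefficients
      stay nonnegative and the generator g1 drops out.\<close>
    define w' where "w' = (if w g0 < 0 then w else (\<lambda>v. - w v))"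
    have w'0: "w' g0 < 0" using g0 by (auto simp: w'_def)
    have w': "(\<Sum>v\<in>S. w' v *\<^sub>R v) = 0"
      using w by (auto simp: w'_def sum_negf)
    define I where "I = (\<lambda>v. \<kappa> v / (- w' v)) ` {v\<in>S. w' v < 0}"
    define t where "t = Min I"
    have I: "finite I" "I \<noteq> {}" using g0 w'0 less.prems(1) by (auto simp: I_def)
    obtain g1 where g1: "g1 \<in> S" "w' g1 < 0" "t = \<kappa> g1 / (- w' g1)"
      using Min_in[OF I] unfolding t_def I_def by auto
    have t0: "0 \<le> t" using g1 less.prems(2) by (auto simp: divide_nonneg_neg)
    have nonneg: "\<forall>v\<in>S. 0 \<le> \<kappa> v + t * w' v"
    proof
      fix v assume v: "v \<in> S"
      show "0 \<le> \<kappa> v + t * w' v"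
      proof (cases "w' v < 0")
        case False
        then show ?thesis using v t0 less.prems(2) by auto
      next
        case True
        then have "t \<le> \<kappa> v / (- w' v)"
          using v I unfolding t_def I_def by (auto intro: Min_le)
        then show ?thesis using True by (simp add: field_simps)
      qed
    qed
    have "\<kappa> g1 + t * w' g1 = 0" using g1(2,3) by simp
    have "(\<Sum>v\<in>S. (t * w' v) *\<^sub>R v) = t *\<^sub>R (\<Sum>v\<in>S. w' v *\<^sub>R v)"
      by (simp add: scaleR_sum_right)
    then have "x = (\<Sum>v\<in>S. (\<kappa> v + t * w' v) *\<^sub>R v)"
      using less.prems(3) w' by (simp add: scaleR_add_left sum.distrib)
    also have "\<dots> = (\<Sum>v\<in>S - {g1}. (\<kappa> v + t * w' v) *\<^sub>R v)"
      using sum.remove[OF less.prems(1) g1(1), of "\<lambda>v. (\<kappa> v + t * w' v) *\<^sub>R v"]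
        \<open>\<kappa> g1 + t * w' g1 = 0\<close> by simp
    finally have "x = (\<Sum>v\<in>S - {g1}. (\<kappa> v + t * w' v) *\<^sub>R v)" .
    moreover have "card (S - {g1}) < card S"
      using g1(1) less.prems(1) by (meson card_Diff1_less)
    ultimately have "\<exists>S' \<kappa>'. S' \<subseteq> S - {g1} \<and> card S' \<le> DIM('a) \<and> (\<forall>g\<in>S'. 0 \<le> \<kappa>' g) \<and>
        x = (\<Sum>g\<in>S'. \<kappa>' g *\<^sub>R g)"
      using nonneg less.prems(1) by (intro less.hyps) auto
    then show ?thesis by blast
  qed
qed

lemma convex_zero_combination_cone:
  fixes A :: "'a::euclidean_space"
  assumes "finite S" "S \<subseteq> G" "\<forall>g\<in>S. 0 \<le> \<kappa> g" "- A = (\<Sum>g\<in>S. \<kappa> g *\<^sub>R g)"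
  shows "convex_zero_combination DIM('a) A G"
proof -
  obtain S' \<kappa>' where S': "S' \<subseteq> S" "card S' \<le> DIM('a)" "\<forall>g\<in>S'. 0 \<le> \<kappa>' g"
      "- A = (\<Sum>g\<in>S'. \<kappa>' g *\<^sub>R g)"
    using conic_caratheodory[OF assms(1,3,4)] by blast
  define N where "N = 1 + sum \<kappa>' S'"
  have "0 < N" unfolding N_def using S'(3) by (smt (verit) sum_nonneg)
  have "(1/N) *\<^sub>R A + (\<Sum>g\<in>S'. (\<kappa>' g / N) *\<^sub>R g) = (1/N) *\<^sub>R (A + (\<Sum>g\<in>S'. \<kappa>' g *\<^sub>R g))"
    by (simp add: scaleR_add_right scaleR_sum_right)
  also have "\<dots> = 0" by (simp flip: S'(4))
  finally have "(1/N) *\<^sub>R A + (\<Sum>g\<in>S'. (\<kappa>' g / N) *\<^sub>R g) = 0" .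
  moreover have "1/N + (\<Sum>g\<in>S'. \<kappa>' g / N) = 1"
    using \<open>0 < N\<close> by (simp add: N_def field_simps flip: sum_divide_distrib)
  moreover have "finite S'" using S'(1) assms(1) finite_subset by blast
  ultimately show ?thesis
    unfolding convex_zero_combination_def using S' assms(2) \<open>0 < N\<close>
    by (intro exI[of _ S'] exI[of _ "1/N"] exI[of _ "\<lambda>g. \<kappa>' g / N"]) auto
qed

lemma convex_zero_combination_convex_hull:
  assumes "0 \<in> convex hull Q" "finite Q" "Q \<subseteq> G" "card Q \<le> n"
  shows "convex_zero_combination n A G"
proof -
  obtain u where "\<forall>x\<in>Q. 0 \<le> u x" "sum u Q = 1" "(\<Sum>x\<in>Q. u x *\<^sub>R x) = 0"
    using assms(1) unfolding convex_hull_finite[OF assms(2)] by blast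
  then show ?thesis
    unfolding convex_zero_combination_def using assms(2-4)
    by (intro exI[of _ Q] exI[of _ 0] exI[of _ u]) auto
qed

lemma convex_zero_combination_positive_weights:
  fixes A :: "'a::euclidean_space"
  assumes P: "finite P" "P \<subseteq> G" "\<forall>x\<in>P. 0 < u x" "sum u P = 1" "(\<Sum>x\<in>P. u x *\<^sub>R x) = 0"
  shows "convex_zero_combination DIM('a) A G"
proof (cases "- A \<in> span P")
  case True
  then obtain \<nu> where \<nu>: "- A = (\<Sum>v\<in>P. \<nu> v *\<^sub>R v)"
    unfolding span_finite[OF P(1)] by blast
  \<comment> \<open>Adding a large multiple of the vanishing combination makes every coefficient nonnegative.\<close>
  define s where "s = (\<Sum>v\<in>P. \<bar>\<nu> v\<bar> / u v)"
  have "\<bar>\<nu> v\<bar> \<le> s * u v" if "v \<in> P" for v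
  proof -
    have "\<bar>\<nu> v\<bar> / u v \<le> s"
      unfolding s_def using P that by (intro member_le_sum) auto
    then show ?thesis using P(3) that by (simp add: field_simps)
  qed
  then have "\<forall>v\<in>P. 0 \<le> \<nu> v + s * u v"
    by (smt (verit) abs_ge_minus_self)
  moreover have "- A = (\<Sum>v\<in>P. \<nu> v *\<^sub>R v) + s *\<^sub>R (\<Sum>v\<in>P. u v *\<^sub>R v)"
    using \<nu> P(5) by simp
  then have "- A = (\<Sum>v\<in>P. (\<nu> v + s * u v) *\<^sub>R v)"
    by (simp add: scaleR_add_left sum.distrib scaleR_sum_right)
  ultimately show ?thesis
    by (rule convex_zero_combination_cone[OF P(1,2)])
next
  case False
  have "0 \<in> convex hull P"
    using P(3-5) unfolding convex_hull_finite[OF P(1)] by (intro CollectI exI[of _ u]) (simp add: less_imp_le)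
  then have "aff_dim P = int (dim P)"
    using convex_hull_subset_affine_hull aff_dim_zero by blast
  moreover have "dim P < DIM('a)"
    using False dim_eq_full dim_subset_UNIV[of P] by (metis UNIV_I le_neq_implies_less)
  moreover obtain Q where "finite Q" "Q \<subseteq> P" "card Q \<le> aff_dim P + 1" "0 \<in> convex hull Q"
    using \<open>0 \<in> convex hull P\<close> unfolding caratheodory_aff_dim[of P] by blast
  ultimately show ?thesis
    using P(2) by (intro convex_zero_combination_convex_hull[of Q]) auto
qed

lemma convex_zero_combination_if_zero_in_convex_hull:
  fixes A :: "'a::euclidean_space"
  assumes "0 \<in> convex hull (insert A G)"
  shows "convex_zero_combination DIM('a) A G"
proof -
  obtain P u where P: "finite P" "P \<subseteq> insert A G" "\<forall>x\<in>P. 0 < u x" "sum u P = 1"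
      "(\<Sum>x\<in>P. u x *\<^sub>R x) = 0"
    using convex_hull_explicit_pos[OF assms] by blast
  show ?thesis
  proof (cases "A \<in> P")
    case True
    have "u A *\<^sub>R A + (\<Sum>x\<in>P - {A}. u x *\<^sub>R x) = 0"
      using P(5) sum.remove[OF P(1) True, of "\<lambda>x. u x *\<^sub>R x"] by simp
    then have "(\<Sum>x\<in>P - {A}. u x *\<^sub>R x) = - (u A *\<^sub>R A)"
      by (simp add: eq_neg_iff_add_eq_0 add.commute)
    then have "- A = (1 / u A) *\<^sub>R (\<Sum>x\<in>P - {A}. u x *\<^sub>R x)"
      using P(3) True by (simp add: less_imp_neq[symmetric])
    also have "\<dots> = (\<Sum>x\<in>P - {A}. (u x / u A) *\<^sub>R x)"
      by (simp add: scaleR_sum_right)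
    finally have "- A = (\<Sum>x\<in>P - {A}. (u x / u A) *\<^sub>R x)" .
    then show ?thesis
      using P True by (intro convex_zero_combination_cone[of "P - {A}" G]) (auto simp: less_imp_le)
  next
    case False
    then show ?thesis
      using P by (intro convex_zero_combination_positive_weights[of P G u]) auto
  qed
qed

lemma convex_zero_combination_linear_image:
  assumes "linear L" "inj L" "convex_zero_combination n A G"
  shows "convex_zero_combination n (L A) (L ` G)"
proof -
  obtain S c0 c where S: "finite S" "S \<subseteq> G" "card S \<le> n" "0 \<le> c0" "\<forall>g\<in>S. 0 \<le> c g"
      "c0 + sum c S = 1" "c0 *\<^sub>R A + (\<Sum>g\<in>S. c g *\<^sub>R g) = 0"
    using assms(3) unfolding convex_zero_combination_def by blast
  define c' where "c' = c \<circ> inv L"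
  have inj: "inj_on L S" using assms(2) inj_on_subset by blast
  have "c0 *\<^sub>R L A + (\<Sum>y\<in>L ` S. c' y *\<^sub>R y) = L (c0 *\<^sub>R A + (\<Sum>g\<in>S. c g *\<^sub>R g))"
    using assms(1,2) by (simp add: sum.reindex[OF inj] c'_def linear_add linear_scale linear_sum)
  moreover have "sum c' (L ` S) = sum c S"
    using assms(2) by (simp add: sum.reindex[OF inj] c'_def)
  moreover have "card (L ` S) \<le> n"
    using card_image_le[OF S(1), of L] S(3) by linarith
  ultimately show ?thesis
    unfolding convex_zero_combination_def using S assms(1,2)
    by (intro exI[of _ "L ` S"] exI[of _ c0] exI[of _ c'])
       (auto simp: c'_def linear_0)
qed

lemma convex_zero_combination_indexed:
  fixes D :: "'t \<Rightarrow> 'v::real_vector"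
  assumes "convex_zero_combination n A (D ` T)" "T \<noteq> {}"
  shows "\<exists>k lam ts. k \<le> n \<and> (\<forall>i\<le>k. 0 \<le> lam i \<and> ts i \<in> T) \<and> (\<Sum>i\<le>k. lam i) = 1 \<and>
           lam 0 *\<^sub>R A + (\<Sum>i\<in>{1..k}. lam i *\<^sub>R D (ts i)) = 0 \<and>
           (0 \<notin> convex hull (D ` T) \<longrightarrow> lam 0 \<noteq> 0)"
proof -
  obtain S c0 c where S: "finite S" "S \<subseteq> D ` T" "card S \<le> n" "0 \<le> c0" "\<forall>g\<in>S. 0 \<le> c g"
      "c0 + sum c S = 1" "c0 *\<^sub>R A + (\<Sum>g\<in>S. c g *\<^sub>R g) = 0"
    using assms(1) unfolding convex_zero_combination_def by blast
  have "\<forall>g\<in>S. \<exists>t\<in>T. D t = g" using S(2) by blast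
  then obtain \<tau> where \<tau>: "\<forall>g\<in>S. \<tau> g \<in> T \<and> D (\<tau> g) = g" by metis
  obtain t0 where "t0 \<in> T" using assms(2) by blast
  define k where "k = card S"
  obtain e where e: "bij_betw e {1..k} S"
    using ex_bij_betw_nat_finite_1[OF S(1)] unfolding k_def by blast
  define lam where "lam i = (if i = 0 then c0 else c (e i))" for i
  define ts where "ts i = (if i = 0 then t0 else \<tau> (e i))" for i
  have e_in: "e i \<in> S" if "i \<in> {1..k}" for i
    using e that bij_betwE by blast
  have "(\<Sum>i\<in>{1..k}. lam i) = (\<Sum>i\<in>{1..k}. c (e i))"
    by (rule sum.cong) (auto simp: lam_def)
  also have "\<dots> = sum c S"
    by (rule sum.reindex_bij_betw[OF e])
  finally have sum_lam: "(\<Sum>i\<in>{1..k}. lam i) = sum c S" .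
  have "(\<Sum>i\<in>{1..k}. lam i *\<^sub>R D (ts i)) = (\<Sum>i\<in>{1..k}. c (e i) *\<^sub>R e i)"
    by (rule sum.cong) (use e_in \<tau> in \<open>auto simp: lam_def ts_def\<close>)
  also have "\<dots> = (\<Sum>g\<in>S. c g *\<^sub>R g)"
    by (rule sum.reindex_bij_betw[OF e])
  finally have sum_D: "(\<Sum>i\<in>{1..k}. lam i *\<^sub>R D (ts i)) = (\<Sum>g\<in>S. c g *\<^sub>R g)" .
  have "{..k} = insert 0 {1..k}" by auto
  then have "(\<Sum>i\<le>k. lam i) = 1"
    using sum_lam S(6) by (simp add: lam_def)
  moreover have "lam 0 *\<^sub>R A + (\<Sum>i\<in>{1..k}. lam i *\<^sub>R D (ts i)) = 0"
    using S(7) sum_D by (simp add: lam_def)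
  moreover have "\<forall>i\<le>k. 0 \<le> lam i \<and> ts i \<in> T"
    using S(4,5) \<tau> e_in \<open>t0 \<in> T\<close> by (auto simp: lam_def ts_def)
  moreover have "0 \<notin> convex hull (D ` T) \<longrightarrow> lam 0 \<noteq> 0"
  proof (intro impI notI)
    assume "lam 0 = 0"
    then have "0 \<in> convex hull S"
      using S(5-7) unfolding convex_hull_finite[OF S(1)] by (auto simp: lam_def)
    moreover assume "0 \<notin> convex hull (D ` T)"
    ultimately show False using S(2) hull_mono by blast
  qed
  moreover have "k \<le> n" using S(3) by (simp add: k_def)
  ultimately show ?thesis by blast
qed

section \<open>Linear functionals on Euclidean space\<close>

definition riesz_vector :: "('a::euclidean_space \<Rightarrow>\<^sub>L real) \<Rightarrow> 'a" where
  "riesz_vector d = (\<Sum>b\<in>Basis. d b *\<^sub>R b)"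

lemma blinfun_apply_eq_inner_riesz_vector: "blinfun_apply d v = riesz_vector d \<bullet> v"
proof -
  have "blinfun_apply d v = blinfun_apply d (\<Sum>b\<in>Basis. (v \<bullet> b) *\<^sub>R b)"
    by (simp add: euclidean_representation)
  also have "\<dots> = (\<Sum>b\<in>Basis. (v \<bullet> b) * blinfun_apply d b)"
    by (simp add: blinfun.sum_right blinfun.scaleR_right)
  also have "\<dots> = riesz_vector d \<bullet> v"
    unfolding riesz_vector_def inner_sum_left inner_scaleR_left
    by (intro sum.cong refl) (simp add: inner_commute)
  finally show ?thesis .
qed

lemma bounded_linear_riesz_vector: "bounded_linear riesz_vector"
  unfolding riesz_vector_def
  by (intro bounded_linear_sum bounded_linear_compose[OF bounded_linear_scaleR_left]
      blinfun.bounded_linear_left)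

lemma linear_riesz_vector: "linear riesz_vector"
  using bounded_linear_riesz_vector by (rule bounded_linear.linear)

lemma blinfun_inner_left_riesz_vector [simp]: "blinfun_inner_left (riesz_vector d) = d"
  by (rule blinfun_eqI) (simp add: blinfun_apply_eq_inner_riesz_vector inner_commute)

lemma riesz_vector_blinfun_inner_left [simp]: "riesz_vector (blinfun_inner_left x) = x"
  using euclidean_representation[of x] by (simp add: riesz_vector_def inner_commute)

lemma convex_zero_combination_blinfun:
  fixes A :: "'a::euclidean_space \<Rightarrow>\<^sub>L real"
  assumes "0 \<in> convex hull (insert A G)"
  shows "convex_zero_combination DIM('a) A G"
proof -
  have "0 \<in> riesz_vector ` (convex hull (insert A G))"
    using assms linear_0[OF linear_riesz_vector] by (metis image_eqI)
  then have "0 \<in> convex hull (insert (riesz_vector A) (riesz_vector ` G))"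
    by (simp add: convex_hull_linear_image[OF linear_riesz_vector])
  then have comb: "convex_zero_combination DIM('a) (riesz_vector A) (riesz_vector ` G)"
    by (rule convex_zero_combination_if_zero_in_convex_hull)
  have lin_inner: "linear (blinfun_inner_left :: 'a \<Rightarrow> _)"
    using bounded_linear_blinfun_inner_left bounded_linear.linear by blast
  have inj_inner: "inj (blinfun_inner_left :: 'a \<Rightarrow> _)"
    by (rule inj_on_inverseI[where g = riesz_vector]) simp
  have "convex_zero_combination DIM('a)
      (blinfun_inner_left (riesz_vector A)) (blinfun_inner_left ` riesz_vector ` G)"
    by (rule convex_zero_combination_linear_image[OF lin_inner inj_inner comb])
  then show ?thesis by (simp add: image_image)
qed

lemma separating_direction_blinfun:
  fixes K :: "('a::euclidean_space \<Rightarrow>\<^sub>L real) set"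
  assumes "compact K" "0 \<notin> convex hull K"
  obtains v where "\<forall>d\<in>K. 0 < d v"
proof -
  have "compact (convex hull (riesz_vector ` K))"
    using assms(1) bounded_linear_riesz_vector
    by (intro compact_convex_hull compact_continuous_image linear_continuous_on)
  moreover have "0 \<notin> convex hull (riesz_vector ` K)"
  proof
    assume "0 \<in> convex hull (riesz_vector ` K)"
    then obtain d where "d \<in> convex hull K" "riesz_vector d = 0"
      by (auto simp flip: convex_hull_linear_image[OF linear_riesz_vector])
    then have "d = 0"
      by (metis blinfun_inner_left_riesz_vector linear_riesz_vector linear_0
          riesz_vector_blinfun_inner_left)
    with \<open>d \<in> convex hull K\<close> assms(2) show False by simp
  qed
  ultimately obtain a b where "0 < b" "\<forall>x\<in>convex hull (riesz_vector ` K). b < a \<bullet> x"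
    using separating_hyperplane_closed_0 convex_convex_hull compact_imp_closed by metis
  then have "\<forall>d\<in>K. 0 < d a"
    by (smt (verit) blinfun_apply_eq_inner_riesz_vector hull_inc image_eqI inner_commute)
  then show ?thesis by (rule that)
qed

section \<open>Optimality along directions\<close>

lemma has_gateaux_diff_unique:
  assumes "has_gateaux_diff \<phi> x d" "has_gateaux_diff \<phi> x d'"
  shows "d' = d"
proof (rule blinfun_eqI)
  fix v
  show "blinfun_apply d' v = blinfun_apply d v"
    using tendsto_unique[OF trivial_limit_at_right_real] assms[unfolded has_gateaux_diff_def, THEN spec[of _ v]]
    by blast
qed

lemma has_gateaux_diff_gateaux_diff:
  assumes "gateaux_differentiable \<phi> x"
  shows "has_gateaux_diff \<phi> x (gateaux_diff \<phi> x)"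
proof -
  obtain d where d: "has_gateaux_diff \<phi> x d"
    using assms unfolding gateaux_differentiable_def by blast
  then have "gateaux_diff \<phi> x = d"
    unfolding gateaux_diff_def by (blast intro: has_gateaux_diff_unique)
  then show ?thesis using d by simp
qed

lemma compact_continuous_positive_bounded_below:
  fixes \<phi> :: "'b::topological_space \<Rightarrow> real"
  assumes "compact S" "continuous_on S \<phi>" "\<forall>t\<in>S. 0 < \<phi> t"
  obtains b where "0 < b" "\<forall>t\<in>S. b \<le> \<phi> t"
proof (cases "S = {}")
  case True
  then show ?thesis using that[of 1] by simp
next
  case False
  then obtain t0 where "t0 \<in> S" "\<forall>t\<in>S. \<phi> t0 \<le> \<phi> t"
    using continuous_attains_inf[OF assms(1) False assms(2)] by blast
  then show ?thesis using that[of "\<phi> t0"] assms(3) by blast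
qed

lemma eventually_at_right_ray_in_open:
  fixes x v :: "'a::real_normed_vector"
  assumes "open W" "x \<in> W"
  shows "\<forall>\<^sub>F s in at_right 0. x + s *\<^sub>R v \<in> W"
proof -
  have "((\<lambda>s::real. x + s *\<^sub>R v) \<longlongrightarrow> x + 0 *\<^sub>R v) (at_right 0)"
    by (intro tendsto_intros)
  then show ?thesis
    using assms by (simp add: topological_tendstoD)
qed

lemma eventually_feasible_along_ascent_direction:
  fixes h :: "'a::real_normed_vector \<Rightarrow> 'b::topological_space \<Rightarrow> real"
  assumes T_compact: "compact (UNIV :: 'b set)"
    and feasible: "\<forall>t. 0 \<le> h x t"
    and equi_diff: "equi_gateaux_differentiable (\<lambda>t x. h x t) UNIV x"
    and equi_lsc: "equi_lsc (\<lambda>t x. h x t) (UNIV - {t. h x t = 0}) x"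
    and cont_h: "continuous_on UNIV (\<lambda>t. h x t)"
    and cont_diff: "continuous_on UNIV (\<lambda>t. gateaux_diff (\<lambda>x. h x t) x v)"
    and ascent: "\<forall>t. h x t = 0 \<longrightarrow> 0 < gateaux_diff (\<lambda>x. h x t) x v"
  shows "\<forall>\<^sub>F s in at_right 0. \<forall>t. 0 \<le> h (x + s *\<^sub>R v) t"
proof -
  define \<phi> where "\<phi> t = gateaux_diff (\<lambda>x. h x t) x v" for t
  define T0 where "T0 = {t. h x t = 0}"
  have "compact T0"
    using compact_Int_closed[OF T_compact closed_Collect_eq[OF cont_h continuous_on_const[of _ 0]]]
    by (simp add: T0_def)
  then obtain b where b: "0 < b" "\<forall>t\<in>T0. b \<le> \<phi> t"
    using compact_continuous_positive_bounded_below[of T0 \<phi>] continuous_on_subset[OF cont_diff]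
      ascent unfolding \<phi>_def T0_def by blast
  \<comment> \<open>Near the active set the linearisation dominates; on the rest, the constraint has slack
    at x that equi-lower semicontinuity preserves.\<close>
  define U where "U = {t. b/2 < \<phi> t}"
  have "open U"
    unfolding U_def \<phi>_def by (rule open_Collect_less[OF continuous_on_const cont_diff])
  have "T0 \<subseteq> U" using b unfolding U_def by force
  have "compact (- U)"
    using compact_Int_closed[OF T_compact, of "- U"] \<open>open U\<close> by (simp add: closed_Compl)
  moreover have "\<forall>t\<in>- U. 0 < h x t"
    using \<open>T0 \<subseteq> U\<close> feasible unfolding T0_def by (force simp: less_le)
  ultimately obtain m where m: "0 < m" "\<forall>t\<in>- U. m \<le> h x t"
    using compact_continuous_positive_bounded_below continuous_on_subset[OF cont_h subset_UNIV]
    by blast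
  obtain W where W: "open W" "x \<in> W" "\<forall>y\<in>W. \<forall>t\<in>UNIV - T0. - m < h y t - h x t"
    using equi_lsc m(1) unfolding equi_lsc_def T0_def by blast
  have "\<forall>\<epsilon>>0. \<exists>\<delta>>0. \<forall>s. 0 < s \<and> s < \<delta> \<longrightarrow>
      (\<forall>t. \<bar>(h (x + s *\<^sub>R v) t - h x t - s * \<phi> t) / s\<bar> \<le> \<epsilon>)"
    using equi_diff unfolding equi_gateaux_differentiable_def \<phi>_def by simp
  moreover have "0 < b/2" using b(1) by simp
  ultimately obtain \<delta> where \<delta>: "0 < \<delta>"
      "\<forall>s. 0 < s \<and> s < \<delta> \<longrightarrow> (\<forall>t. \<bar>(h (x + s *\<^sub>R v) t - h x t - s * \<phi> t) / s\<bar> \<le> b/2)"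
    by blast
  have "\<forall>\<^sub>F s in at_right 0. x + s *\<^sub>R v \<in> W \<and> s \<in> {0<..<\<delta>}"
    using eventually_at_right_ray_in_open[OF W(1,2)] eventually_at_right_real[OF \<delta>(1)]
    by (rule eventually_conj)
  then show ?thesis
  proof (rule eventually_mono, intro allI)
    fix s t assume s: "x + s *\<^sub>R v \<in> W \<and> s \<in> {0<..<\<delta>}"
    show "0 \<le> h (x + s *\<^sub>R v) t"
    proof (cases "t \<in> U")
      case True
      have "- (b/2) \<le> (h (x + s *\<^sub>R v) t - h x t - s * \<phi> t) / s"
        using \<delta>(2) s by (smt (verit) greaterThanLessThan_iff)
      then have "- (b/2) * s \<le> h (x + s *\<^sub>R v) t - h x t - s * \<phi> t"
        using s by (simp add: pos_le_divide_eq)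
      moreover have "s * (b/2) < s * \<phi> t"
        using True s unfolding U_def by simp
      ultimately show ?thesis
        using feasible[rule_format, of t] by (simp add: algebra_simps)
    next
      case False
      then have "t \<in> UNIV - T0" using \<open>T0 \<subseteq> U\<close> by blast
      then have "- m < h (x + s *\<^sub>R v) t - h x t" using W(3) s by blast
      moreover have "m \<le> h x t" using m(2) False by simp
      ultimately show ?thesis by linarith
    qed
  qed
qed

lemma zero_in_convex_hull_gateaux_diffs:
  fixes h :: "'a::euclidean_space \<Rightarrow> 'b::topological_space \<Rightarrow> real"
  assumes T_compact: "compact (UNIV :: 'b set)"
    and \<Omega>_open: "open \<Omega>" and xh_in: "xh \<in> \<Omega>"
    and xh_feas: "\<forall>t. h xh t \<ge> 0"
    and xh_opt: "\<forall>x\<in>\<Omega>. (\<forall>t. h x t \<ge> 0) \<longrightarrow> f x \<le> f xh"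
    and f_diff: "gateaux_differentiable f xh"
    and equi_diff: "equi_gateaux_differentiable (\<lambda>t x. h x t) UNIV xh"
    and equi_lsc: "equi_lsc (\<lambda>t x. h x t) (UNIV - {t. h xh t = 0}) xh"
    and cont_h: "continuous_on UNIV (\<lambda>t. h xh t)"
    and cont_diff: "continuous_on UNIV (\<lambda>t. gateaux_diff (\<lambda>x. h x t) xh)"
  shows "0 \<in> convex hull
    (insert (gateaux_diff f xh) ((\<lambda>t. gateaux_diff (\<lambda>x. h x t) xh) ` {t. h xh t = 0}))"
    (is "0 \<in> convex hull ?K")
proof (rule ccontr)
  assume "0 \<notin> convex hull ?K"
  moreover have "compact {t. h xh t = 0}"
    using compact_Int_closed[OF T_compact closed_Collect_eq[OF cont_h continuous_on_const[of _ 0]]]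
    by simp
  then have "compact ?K"
    by (intro compact_insert compact_continuous_image continuous_on_subset[OF cont_diff]) auto
  ultimately obtain v where v: "\<forall>d\<in>?K. 0 < d v"
    using separating_direction_blinfun by blast
  have "continuous_on UNIV (\<lambda>t. gateaux_diff (\<lambda>x. h x t) xh v)"
    using cont_diff by (intro continuous_intros)
  then have "\<forall>\<^sub>F s in at_right 0. \<forall>t. 0 \<le> h (xh + s *\<^sub>R v) t"
    using v by (intro eventually_feasible_along_ascent_direction[OF T_compact xh_feas equi_diff equi_lsc cont_h]) auto
  moreover have "\<forall>\<^sub>F s in at_right 0. xh + s *\<^sub>R v \<in> \<Omega>"
    by (rule eventually_at_right_ray_in_open[OF \<Omega>_open xh_in])
  moreover have "((\<lambda>s. (f (xh + s *\<^sub>R v) - f xh) / s) \<longlongrightarrow> gateaux_diff f xh v) (at_right 0)"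
    using has_gateaux_diff_gateaux_diff[OF f_diff] unfolding has_gateaux_diff_def by blast
  then have "\<forall>\<^sub>F s in at_right 0. 0 < (f (xh + s *\<^sub>R v) - f xh) / s"
    using v by (intro order_tendstoD(1)) auto
  moreover have "\<forall>\<^sub>F s in at_right 0. 0 < (s::real)"
    by (simp add: eventually_at_right_less)
  ultimately have "\<forall>\<^sub>F s in at_right 0. f (xh + s *\<^sub>R v) \<le> f xh \<and> f xh < f (xh + s *\<^sub>R v)"
    by eventually_elim (use xh_opt in \<open>auto simp: zero_less_divide_iff\<close>)
  then show False
    using eventually_happens trivial_limit_at_right_real by force
qed

theorem corollary4p5:
  fixes h :: "'a::euclidean_space \<Rightarrow> 'b::t2_space \<Rightarrow> real"
    and f :: "'a \<Rightarrow> real"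
    and \<Omega> :: "'a set"
    and xh :: 'a
  assumes T_compact: "compact (UNIV :: 'b set)"
    and \<Omega>_open: "open \<Omega>" and \<Omega>_ne: "\<Omega> \<noteq> {}"
    and xh_in: "xh \<in> \<Omega>"
    and xh_feas: "\<forall>t. h xh t \<ge> 0"
    and xh_opt: "\<forall>x\<in>\<Omega>. (\<forall>t. h x t \<ge> 0) \<longrightarrow> f x \<le> f xh"
    and a: "{t. h xh t = 0} \<noteq> {}"
    and b1: "gateaux_differentiable f xh"
    and b2: "equi_gateaux_differentiable (\<lambda>t x. h x t) UNIV xh"
    and c: "equi_lsc (\<lambda>t x. h x t) (UNIV - {t. h xh t = 0}) xh"
    and d1: "continuous_on UNIV (\<lambda>t. h xh t)"
    and d2: "continuous_on UNIV (\<lambda>t. gateaux_diff (\<lambda>x. h x t) xh)"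
  shows "\<exists>k::nat. \<exists>lam::nat \<Rightarrow> real. \<exists>ts::nat \<Rightarrow> 'b.
           k \<le> DIM('a) \<and>
           (\<forall>i\<le>k. lam i \<ge> 0 \<and> ts i \<in> {t. h xh t = 0}) \<and>
           (\<Sum>i\<le>k. lam i) = 1 \<and>
           lam 0 *\<^sub>R gateaux_diff f xh
             + (\<Sum>i\<in>{1..k}. lam i *\<^sub>R gateaux_diff (\<lambda>x. h x (ts i)) xh) = 0 \<and>
           (0 \<notin> convex hull ((\<lambda>t. gateaux_diff (\<lambda>x. h x t) xh) ` {t. h xh t = 0})
              \<longrightarrow> lam 0 \<noteq> 0)"
proof -
  have "0 \<in> convex hull
      (insert (gateaux_diff f xh) ((\<lambda>t. gateaux_diff (\<lambda>x. h x t) xh) ` {t. h xh t = 0}))"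
    by (rule zero_in_convex_hull_gateaux_diffs[OF T_compact \<Omega>_open xh_in xh_feas xh_opt b1 b2 c d1 d2])
  then have "convex_zero_combination DIM('a)
      (gateaux_diff f xh) ((\<lambda>t. gateaux_diff (\<lambda>x. h x t) xh) ` {t. h xh t = 0})"
    by (rule convex_zero_combination_blinfun)
  then show ?thesis
    using a by (rule convex_zero_combination_indexed)
qed

end
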